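(* Let $\mathcal{Z}=\{(\mathbf{x}_i,y_i)\}_{i=1}^n$ be drawn i.i.d. from $\rho$, where $|y|\le M$ $\rho$-almost surely. For every $r>0$ and $\epsilon>0$, $$\mathrm{Prob}\{|S(\mathcal{Z},r)-\mathbb{E}S(\mathcal{Z},r)|\ge\epsilon\}\le 2\exp\Big(-\frac{n\epsilon^2}{32(M+\kappa Dr)^4}\Big).$$
   Context: Setting: $X\subset\mathbb{R}^p$ compact, $\rho$ a probability measure on $Z=X\times\mathbb{R}$ with marginal $\rho_X$; $\mathcal{K}$ a Mercer kernel on $X$ with RKHS $\mathbb{H}_{\mathcal{K}}$; $\mathbb{H}^p_{\mathcal{K}}$ the space of $\vec f=(f^1,\dots,f^p)$ with $f^j\in\mathbb{H}_{\mathcal{K}}$; $\mathcal{F}_r=\{\vec f\in\mathbb{H}^p_{\mathcal{K}}:\sum_i\|f^i\|_{\mathcal{K}}\le r\}$. Fix $s>0$ and $\omega^s(\mathbf{x})=\exp(-\|\mathbf{x}\|^2/(2s^2))$. $\mathcal{E}_{\mathcal{Z}}(\vec f)=\frac1{n^2}\sum_{i,j=1}^n\omega^s(\mathbf{x}_j-\mathbf{x}_i)(y_i-y_j+\vec f(\mathbf{x}_i)\cdot(\mathbf{x}_j-\mathbf{x}_i))^2$ and $\mathcal{E}(\vec f)=\int_Z\int_Z\omega^s(\mathbf{x}-\mathbf{u})(y-v+\vec f(\mathbf{x})\cdot(\mathbf{u}-\mathbf{x}))^2d\rho(\mathbf{x},y)d\rho(\mathbf{u},v)$. $S(\mathcal{Z},r)=\sup_{\vec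 f\in\mathcal{F}_r}|\mathcal{E}_{\mathcal{Z}}(\vec f)-\mathcal{E}(\vec f)|$. $\kappa=\sup_{\mathbf{x}\in X}\sqrt{\mathcal{K}(\mathbf{x},\mathbf{x})}$ and $D=\max_{\mathbf{x},\mathbf{u}\in X}\|\mathbf{x}-\mathbf{u}\|$. *)

theory Defs
  imports "HOL-Analysis.Analysis" "HOL-Probability.Probability"
begin

text \<open>Finite kernel combinations  x \<mapsto> sum_{i<m} a_i K(c_i, x)  (pre-RKHS elements)
  and their squared RKHS norm  sum_{i,j<m} a_i a_j K(c_i,c_j).\<close>

definition kfun :: "('a \<Rightarrow> 'a \<Rightarrow> real) \<Rightarrow> nat \<times> (nat \<Rightarrow> 'a) \<times> (nat \<Rightarrow> real) \<Rightarrow> 'a \<Rightarrow> real" where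
  "kfun K r = (case r of (m, c, a) \<Rightarrow> (\<lambda>x. \<Sum>i<m. a i * K (c i) x))"

definition kgram :: "('a \<Rightarrow> 'a \<Rightarrow> real) \<Rightarrow> nat \<times> (nat \<Rightarrow> 'a) \<times> (nat \<Rightarrow> real) \<Rightarrow> real" where
  "kgram K r = (case r of (m, c, a) \<Rightarrow> (\<Sum>i<m. \<Sum>j<m. a i * a j * K (c i) (c j)))"

definition kdist2 :: "('a \<Rightarrow> 'a \<Rightarrow> real) \<Rightarrow> nat \<times> (nat \<Rightarrow> 'a) \<times> (nat \<Rightarrow> real)
    \<Rightarrow> nat \<times> (nat \<Rightarrow> 'a) \<times> (nat \<Rightarrow> real) \<Rightarrow> real" where
  "kdist2 K r1 r2 = (case r1 of (m1, c1, a1) \<Rightarrow> case r2 of (m2, c2, a2) \<Rightarrow>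
      (\<Sum>i<m1. \<Sum>j<m1. a1 i * a1 j * K (c1 i) (c1 j))
    + (\<Sum>i<m2. \<Sum>j<m2. a2 i * a2 j * K (c2 i) (c2 j))
    - 2 * (\<Sum>i<m1. \<Sum>j<m2. a1 i * a2 j * K (c1 i) (c2 j)))"

definition mercer_kernel :: "'a::topological_space set \<Rightarrow> ('a \<Rightarrow> 'a \<Rightarrow> real) \<Rightarrow> bool" where
  "mercer_kernel X K \<longleftrightarrow> continuous_on (X \<times> X) (\<lambda>(x, y). K x y)
     \<and> (\<forall>x\<in>X. \<forall>y\<in>X. K x y = K y x)
     \<and> (\<forall>m c a. (\<forall>i<m. c i \<in> X) \<longrightarrow> kgram K (m, c, a) \<ge> 0)"

text \<open>A sequence of finite kernel combinations (centres in X), Cauchy in the RKHS norm,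
  converging pointwise on X to f (Aronszajn's completion construction of H_K).\<close>
definition rkhs_approx :: "'a set \<Rightarrow> ('a \<Rightarrow> 'a \<Rightarrow> real) \<Rightarrow> ('a \<Rightarrow> real)
    \<Rightarrow> (nat \<Rightarrow> nat \<times> (nat \<Rightarrow> 'a) \<times> (nat \<Rightarrow> real)) \<Rightarrow> bool" where
  "rkhs_approx X K f s \<longleftrightarrow>
     (\<forall>k. \<forall>i<fst (s k). fst (snd (s k)) i \<in> X)
   \<and> (\<forall>e>0. \<exists>N. \<forall>k\<ge>N. \<forall>l\<ge>N. kdist2 K (s k) (s l) < e)
   \<and> (\<forall>x\<in>X. (\<lambda>k. kfun K (s k) x) \<longlonglongrightarrow> f x)"

definition in_rkhs :: "'a set \<Rightarrow> ('a \<Rightarrow> 'a \<Rightarrow> real) \<Rightarrow> ('a \<Rightarrow> real) \<Rightarrow> bool" where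
  "in_rkhs X K f \<longleftrightarrow> (\<exists>s. rkhs_approx X K f s)"

definition rkhs_norm :: "'a set \<Rightarrow> ('a \<Rightarrow> 'a \<Rightarrow> real) \<Rightarrow> ('a \<Rightarrow> real) \<Rightarrow> real" where
  "rkhs_norm X K f = Inf {L. \<exists>s. rkhs_approx X K f s \<and> (\<lambda>k. sqrt (kgram K (s k))) \<longlonglongrightarrow> L}"

definition F_ball :: "(real^'p) set \<Rightarrow> (real^'p \<Rightarrow> real^'p \<Rightarrow> real) \<Rightarrow> real
    \<Rightarrow> ('p \<Rightarrow> real^'p \<Rightarrow> real) set" where
  "F_ball X K r = {f. (\<forall>j. in_rkhs X K (f j)) \<and> (\<Sum>j\<in>UNIV. rkhs_norm X K (f j)) \<le> r}"

definition vapp :: "('p \<Rightarrow> real^'p \<Rightarrow> real) \<Rightarrow> real^'p \<Rightarrow> real^'p" where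
  "vapp f x = (\<chi> j. f j x)"

definition weight :: "real \<Rightarrow> real^'p \<Rightarrow> real" where
  "weight s x = exp (- (norm x)\<^sup>2 / (2 * s\<^sup>2))"

definition emp_err :: "real \<Rightarrow> nat \<Rightarrow> (nat \<Rightarrow> (real^'p) \<times> real) \<Rightarrow> ('p \<Rightarrow> real^'p \<Rightarrow> real) \<Rightarrow> real" where
  "emp_err s n Z f = (1 / (real n)\<^sup>2) * (\<Sum>i<n. \<Sum>j<n.
      weight s (fst (Z j) - fst (Z i)) *
      (snd (Z i) - snd (Z j) + vapp f (fst (Z i)) \<bullet> (fst (Z j) - fst (Z i)))\<^sup>2)"

definition exp_err :: "real \<Rightarrow> ((real^'p) \<times> real) measure \<Rightarrow> ('p \<Rightarrow> real^'p \<Rightarrow> real) \<Rightarrow> real" where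
  "exp_err s \<rho> f = (\<integral>z. (\<integral>w. weight s (fst z - fst w) *
      (snd z - snd w + vapp f (fst z) \<bullet> (fst w - fst z))\<^sup>2 \<partial>\<rho>) \<partial>\<rho>)"

definition S_dev :: "(real^'p) set \<Rightarrow> (real^'p \<Rightarrow> real^'p \<Rightarrow> real) \<Rightarrow> real \<Rightarrow> ((real^'p) \<times> real) measure
    \<Rightarrow> nat \<Rightarrow> real \<Rightarrow> (nat \<Rightarrow> (real^'p) \<times> real) \<Rightarrow> real" where
  "S_dev X K s \<rho> n r Z = (SUP f\<in>F_ball X K r. \<bar>emp_err s n Z f - exp_err s \<rho> f\<bar>)"

definition kappa :: "(real^'p) set \<Rightarrow> (real^'p \<Rightarrow> real^'p \<Rightarrow> real) \<Rightarrow> real" where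
  "kappa X K = (SUP x\<in>X. sqrt (K x x))"

end

theory Submission
  imports Defs
begin

text \<open>Every summand of the empirical error lies in \<open>[0, 4B\<^sup>2]\<close> with \<open>B = M + \<kappa> D r\<close>, since
  \<open>\<bar>f(x)\<bar> \<le> \<kappa> \<parallel>f\<parallel>\<^sub>K\<close> in the RKHS and \<open>\<parallel>u - x\<parallel> \<le> D\<close>. Replacing one of the \<open>n\<close> sample points
  touches only \<open>2n - 1\<close> of the \<open>n\<^sup>2\<close> summands, so the uniform deviation \<open>S(Z, r)\<close> changes by at
  most \<open>c = 8B\<^sup>2/n\<close>. McDiarmid's bounded-differences inequality, derived from Hoeffding's lemma by
  integrating out one coordinate at a time, then gives \<open>2 exp(-2\<epsilon>\<^sup>2/(n c\<^sup>2)) = 2 exp(-n\<epsilon>\<^sup>2/(32 B\<^sup>4))\<close>.\<close>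

section \<open>McDiarmid's inequality\<close>

definition bounded_differences :: "'a measure \<Rightarrow> nat \<Rightarrow> real \<Rightarrow> ((nat \<Rightarrow> 'a) \<Rightarrow> real) \<Rightarrow> bool" where
  "bounded_differences M n c f \<longleftrightarrow>
     (\<forall>Z\<in>space (PiM {..<n} (\<lambda>_. M)). \<forall>k<n. \<forall>w\<in>space M. \<bar>f (Z(k := w)) - f Z\<bar> \<le> c)"

lemma measurable_fun_upd_last:
  "(\<lambda>(z, y). z(n := y)) \<in> PiM {..<n} (\<lambda>_. M) \<Otimes>\<^sub>M M \<rightarrow>\<^sub>M PiM {..<Suc n} (\<lambda>_. M)"
  using measurable_add_dim[of n "{..<n}" "\<lambda>_. M"] by (simp add: lessThan_Suc)

lemma fun_upd_last_in_space:
  "z \<in> space (PiM {..<n} (\<lambda>_. M)) \<Longrightarrow> y \<in> space M \<Longrightarrow> z(n := y) \<in> space (PiM {..<Suc n} (\<lambda>_. M))"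
  by (auto simp: space_PiM PiE_def extensional_def Pi_def)

context prob_space
begin

lemma product_prob_space_iid: "product_prob_space (\<lambda>_. M)"
  by unfold_locales

lemma integrable_fun_upd_last:
  fixes f :: "(nat \<Rightarrow> 'a) \<Rightarrow> real"
  assumes f: "f \<in> borel_measurable (PiM {..<Suc n} (\<lambda>_. M))"
    and fB: "\<forall>Z\<in>space (PiM {..<Suc n} (\<lambda>_. M)). \<bar>f Z\<bar> \<le> B"
    and z: "z \<in> space (PiM {..<n} (\<lambda>_. M))"
  shows "integrable M (\<lambda>y. f (z(n := y)))"
proof (rule integrable_const_bound[where B = B])
  show "(\<lambda>y. f (z(n := y))) \<in> borel_measurable M"
    using measurable_Pair2[OF measurable_comp[OF measurable_fun_upd_last f] z]
    by (simp add: comp_def)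
qed (use fB fun_upd_last_in_space[OF z] in auto)

lemma integral_last_coordinate:
  fixes f :: "(nat \<Rightarrow> 'a) \<Rightarrow> real" and n :: nat
  defines "g \<equiv> \<lambda>z. \<integral>y. f (z(n := y)) \<partial>M"
  assumes f: "f \<in> borel_measurable (PiM {..<Suc n} (\<lambda>_. M))"
    and fB: "\<forall>Z\<in>space (PiM {..<Suc n} (\<lambda>_. M)). \<bar>f Z\<bar> \<le> B"
  shows "g \<in> borel_measurable (PiM {..<n} (\<lambda>_. M))"
    and "\<forall>z\<in>space (PiM {..<n} (\<lambda>_. M)). \<bar>g z\<bar> \<le> B"
    and "(\<integral>Z. f Z \<partial>PiM {..<Suc n} (\<lambda>_. M)) = (\<integral>z. g z \<partial>PiM {..<n} (\<lambda>_. M))"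
proof -
  let ?P = "PiM {..<n} (\<lambda>_. M)" and ?P' = "PiM {..<Suc n} (\<lambda>_. M)"
  interpret PS: product_prob_space "\<lambda>_. M" by (rule product_prob_space_iid)
  interpret P': prob_space ?P' by (intro prob_space_PiM) unfold_locales
  have "(\<lambda>(z, y). f (z(n := y))) \<in> borel_measurable (?P \<Otimes>\<^sub>M M)"
    using measurable_comp[OF measurable_fun_upd_last f] by (simp add: comp_def case_prod_unfold)
  then show "g \<in> borel_measurable ?P"
    unfolding g_def by (rule borel_measurable_lebesgue_integral)
  show "\<forall>z\<in>space ?P. \<bar>g z\<bar> \<le> B"
  proof
    fix z assume z: "z \<in> space ?P"
    have "\<bar>g z\<bar> \<le> (\<integral>y. \<bar>f (z(n := y))\<bar> \<partial>M)" unfolding g_def by (rule integral_abs_bound)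
    also have "\<dots> \<le> (\<integral>y. B \<partial>M)"
      by (rule integral_mono) (use integrable_fun_upd_last[OF f fB z] fB fun_upd_last_in_space[OF z] in auto)
    finally show "\<bar>g z\<bar> \<le> B" by (simp add: prob_space)
  qed
  have "integrable ?P' f"
    by (rule P'.integrable_const_bound[where B = B]) (use f fB in auto)
  then show "(\<integral>Z. f Z \<partial>?P') = (\<integral>z. g z \<partial>?P)"
    using PS.product_integral_insert[of "{..<n}" n f] by (simp add: g_def lessThan_Suc)
qed

lemma bounded_differences_integral_last:
  fixes f :: "(nat \<Rightarrow> 'a) \<Rightarrow> real"
  assumes f: "f \<in> borel_measurable (PiM {..<Suc n} (\<lambda>_. M))"
    and fB: "\<forall>Z\<in>space (PiM {..<Suc n} (\<lambda>_. M)). \<bar>f Z\<bar> \<le> B"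
    and fc: "bounded_differences M (Suc n) c f"
  shows "bounded_differences M n c (\<lambda>z. \<integral>y. f (z(n := y)) \<partial>M)"
  unfolding bounded_differences_def
proof (intro ballI allI impI)
  fix z k w assume z: "z \<in> space (PiM {..<n} (\<lambda>_. M))" and k: "k < n" and w: "w \<in> space M"
  note int = integrable_fun_upd_last[OF f fB]
  have zk: "z(k := w) \<in> space (PiM {..<n} (\<lambda>_. M))"
    using z k w by (auto simp: space_PiM PiE_def extensional_def Pi_def)
  have "\<bar>(\<integral>y. f ((z(k := w))(n := y)) \<partial>M) - (\<integral>y. f (z(n := y)) \<partial>M)\<bar>
      = \<bar>\<integral>y. f ((z(n := y))(k := w)) - f (z(n := y)) \<partial>M\<bar>"
    using k int[OF zk] int[OF z] by (simp add: fun_upd_twist)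
  also have "\<dots> \<le> (\<integral>y. \<bar>f ((z(n := y))(k := w)) - f (z(n := y))\<bar> \<partial>M)"
    by (rule integral_abs_bound)
  also have "\<dots> \<le> (\<integral>y. c \<partial>M)"
  proof (rule integral_mono)
    fix y assume "y \<in> space M"
    from fc[unfolded bounded_differences_def, rule_format, OF fun_upd_last_in_space[OF z this]] k w
    show "\<bar>f ((z(n := y))(k := w)) - f (z(n := y))\<bar> \<le> c" by simp
  qed (use int[OF zk] int[OF z] k in \<open>auto simp: fun_upd_twist\<close>)
  finally show "\<bar>(\<integral>y. f ((z(k := w))(n := y)) \<partial>M) - (\<integral>y. f (z(n := y)) \<partial>M)\<bar> \<le> c"
    by (simp add: prob_space)
qed

text \<open>Conditionally on the first \<open>n\<close> coordinates, \<open>y \<mapsto> f(z(n := y))\<close> has oscillation at most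
  \<open>c\<close>, so Hoeffding's lemma bounds its centred exponential moment.\<close>

lemma nn_integral_exp_last_coordinate_le:
  fixes f :: "(nat \<Rightarrow> 'a) \<Rightarrow> real"
  assumes f: "f \<in> borel_measurable (PiM {..<Suc n} (\<lambda>_. M))"
    and fB: "\<forall>Z\<in>space (PiM {..<Suc n} (\<lambda>_. M)). \<bar>f Z\<bar> \<le> B"
    and fc: "bounded_differences M (Suc n) c f"
    and z: "z \<in> space (PiM {..<n} (\<lambda>_. M))" and l: "l > 0"
  shows "(\<integral>\<^sup>+y. exp (l * (f (z(n := y)) - E)) \<partial>M)
    \<le> ennreal (exp (l * ((\<integral>y. f (z(n := y)) \<partial>M) - E))) * exp (l\<^sup>2 * c\<^sup>2 / 8)"
proof -
  define g where "g = (\<integral>y. f (z(n := y)) \<partial>M)"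
  define h where "h y = f (z(n := y)) - g" for y
  define a where "a = (INF y\<in>space M. f (z(n := y))) - g"
  note int = integrable_fun_upd_last[OF f fB z]
  have bdd: "bdd_below ((\<lambda>y. f (z(n := y))) ` space M)"
    using fB fun_upd_last_in_space[OF z] by (intro bdd_belowI[where m = "- B"]) force
  have "h y \<in> {a..a + c}" if y: "y \<in> space M" for y
  proof -
    have "f (z(n := y)) - c \<le> (INF y\<in>space M. f (z(n := y)))"
    proof (rule cINF_greatest[OF not_empty])
      fix y' assume "y' \<in> space M"
      from fc[unfolded bounded_differences_def, rule_format, OF fun_upd_last_in_space[OF z this], of n y] y
      show "f (z(n := y)) - c \<le> f (z(n := y'))" by simp
    qed
    then show ?thesis using cINF_lower[OF bdd y] by (auto simp: h_def a_def)
  qed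
  moreover have h_meas: "h \<in> borel_measurable M" unfolding h_def using int by measurable
  ultimately interpret H: interval_bounded_random_variable M h a "a + c"
    by unfold_locales auto
  have "expectation h = 0" unfolding h_def g_def using int by (simp add: prob_space)
  from H.Hoeffdings_lemma_nn_integral_0[OF l this]
  have hoeffding: "(\<integral>\<^sup>+y. exp (l * h y) \<partial>M) \<le> exp (l\<^sup>2 * c\<^sup>2 / 8)" by simp
  have "(\<integral>\<^sup>+y. exp (l * (f (z(n := y)) - E)) \<partial>M) = (\<integral>\<^sup>+y. ennreal (exp (l * (g - E))) * exp (l * h y) \<partial>M)"
    by (rule nn_integral_cong) (simp add: h_def ennreal_mult'[symmetric] exp_add[symmetric] algebra_simps)
  also have "\<dots> = ennreal (exp (l * (g - E))) * (\<integral>\<^sup>+y. exp (l * h y) \<partial>M)"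
    using h_meas by (intro nn_integral_cmult) simp
  also have "\<dots> \<le> ennreal (exp (l * (g - E))) * exp (l\<^sup>2 * c\<^sup>2 / 8)"
    using hoeffding by (rule mult_left_mono) simp
  finally show ?thesis by (simp add: g_def)
qed

lemma mcdiarmid_mgf_le:
  fixes f :: "(nat \<Rightarrow> 'a) \<Rightarrow> real"
  assumes "f \<in> borel_measurable (PiM {..<n} (\<lambda>_. M))"
    and "\<forall>Z\<in>space (PiM {..<n} (\<lambda>_. M)). \<bar>f Z\<bar> \<le> B"
    and "bounded_differences M n c f" and l: "l > 0"
  shows "(\<integral>\<^sup>+Z. exp (l * (f Z - (\<integral>Z'. f Z' \<partial>PiM {..<n} (\<lambda>_. M)))) \<partial>PiM {..<n} (\<lambda>_. M))
       \<le> exp (l\<^sup>2 * real n * c\<^sup>2 / 8)"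
  using assms(1-3)
proof (induction n arbitrary: f)
  case 0
  interpret PS: product_prob_space "\<lambda>_. M" by (rule product_prob_space_iid)
  show ?case by (simp add: PiM_empty nn_integral_count_space_finite lebesgue_integral_count_space_finite)
next
  case (Suc n)
  let ?P = "PiM {..<n} (\<lambda>_. M)" and ?P' = "PiM {..<Suc n} (\<lambda>_. M)"
  interpret PS: product_prob_space "\<lambda>_. M" by (rule product_prob_space_iid)
  define g where "g z = (\<integral>y. f (z(n := y)) \<partial>M)" for z
  note g = integral_last_coordinate[OF Suc.prems(1,2), folded g_def]
    bounded_differences_integral_last[OF Suc.prems, folded g_def]
  define E where "E = (\<integral>z. g z \<partial>?P)"
  have "(\<integral>Z'. f Z' \<partial>?P') = E" by (simp add: g(3) E_def)
  then have "(\<integral>\<^sup>+Z. exp (l * (f Z - (\<integral>Z'. f Z' \<partial>?P'))) \<partial>?P')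
      = (\<integral>\<^sup>+z. (\<integral>\<^sup>+y. exp (l * (f (z(n := y)) - E)) \<partial>M) \<partial>?P)"
    using PS.product_nn_integral_insert[of "{..<n}" n "\<lambda>Z. exp (l * (f Z - E))"] Suc.prems(1)
    by (simp add: lessThan_Suc)
  also have "\<dots> \<le> (\<integral>\<^sup>+z. ennreal (exp (l * (g z - E))) * ennreal (exp (l\<^sup>2 * c\<^sup>2 / 8)) \<partial>?P)"
    unfolding g_def by (rule nn_integral_mono) (erule nn_integral_exp_last_coordinate_le[OF Suc.prems _ l])
  also have "\<dots> = (\<integral>\<^sup>+z. exp (l * (g z - E)) \<partial>?P) * ennreal (exp (l\<^sup>2 * c\<^sup>2 / 8))"
    by (rule nn_integral_multc) (use g(1) in measurable)
  also have "\<dots> \<le> ennreal (exp (l\<^sup>2 * real n * c\<^sup>2 / 8)) * ennreal (exp (l\<^sup>2 * c\<^sup>2 / 8))"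
    using Suc.IH[OF g(1,2,4)] unfolding E_def by (intro mult_right_mono) auto
  also have "\<dots> = exp (l\<^sup>2 * real (Suc n) * c\<^sup>2 / 8)"
    by (simp add: ennreal_mult'[symmetric] exp_add[symmetric] algebra_simps)
  finally show ?case .
qed

lemma mcdiarmid_upper_tail:
  fixes f :: "(nat \<Rightarrow> 'a) \<Rightarrow> real"
  assumes f: "f \<in> borel_measurable (PiM {..<n} (\<lambda>_. M))"
    and fB: "\<forall>Z\<in>space (PiM {..<n} (\<lambda>_. M)). \<bar>f Z\<bar> \<le> B"
    and fc: "bounded_differences M n c f" and \<epsilon>: "\<epsilon> > 0"
  shows "measure (PiM {..<n} (\<lambda>_. M))
           {Z \<in> space (PiM {..<n} (\<lambda>_. M)). \<epsilon> \<le> f Z - (\<integral>Z'. f Z' \<partial>PiM {..<n} (\<lambda>_. M))}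
         \<le> exp (- 2 * \<epsilon>\<^sup>2 / (real n * c\<^sup>2))"
proof -
  let ?P = "PiM {..<n} (\<lambda>_. M)"
  interpret P: prob_space ?P by (intro prob_space_PiM) unfold_locales
  define E where "E = (\<integral>Z'. f Z' \<partial>?P)"
  show ?thesis
  proof (cases "real n * c\<^sup>2 = 0")
    case True
    then have "exp (- 2 * \<epsilon>\<^sup>2 / (real n * c\<^sup>2)) = 1" by simp
    then show ?thesis using P.prob_le_1 by metis
  next
    case False
    then have nc: "real n * c\<^sup>2 > 0" by (simp add: zero_less_mult_iff)
    define l where "l = 4 * \<epsilon> / (real n * c\<^sup>2)"
    have l: "l > 0" using nc \<epsilon> by (simp add: l_def)
    have "emeasure ?P {Z \<in> space ?P. \<epsilon> \<le> f Z - E}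
        \<le> ennreal (exp (- l * \<epsilon>)) * (\<integral>\<^sup>+Z. ennreal (exp (l * (f Z - E))) * indicator (space ?P) Z \<partial>?P)"
      by (rule Chernoff_ineq_nn_integral_ge[OF l]) (use f in measurable)
    also have "\<dots> = ennreal (exp (- l * \<epsilon>)) * (\<integral>\<^sup>+Z. exp (l * (f Z - E)) \<partial>?P)"
      by (intro arg_cong2[where f = "(*)"] refl nn_integral_cong) simp
    also have "\<dots> \<le> ennreal (exp (- l * \<epsilon>)) * ennreal (exp (l\<^sup>2 * real n * c\<^sup>2 / 8))"
      using mcdiarmid_mgf_le[OF f fB fc l] unfolding E_def by (rule mult_left_mono) simp
    also have "\<dots> = ennreal (exp (- 2 * \<epsilon>\<^sup>2 / (real n * c\<^sup>2)))"
    proof -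
      have "- l * \<epsilon> + l\<^sup>2 * real n * c\<^sup>2 / 8 = - 2 * \<epsilon>\<^sup>2 / (real n * c\<^sup>2)"
        using nc by (simp add: l_def field_simps power2_eq_square)
      then show ?thesis by (simp add: ennreal_mult'[symmetric] exp_add[symmetric])
    qed
    finally show ?thesis unfolding E_def by (simp add: P.emeasure_eq_measure)
  qed
qed

lemma mcdiarmid_inequality:
  fixes f :: "(nat \<Rightarrow> 'a) \<Rightarrow> real"
  assumes f: "f \<in> borel_measurable (PiM {..<n} (\<lambda>_. M))"
    and fB: "\<forall>Z\<in>space (PiM {..<n} (\<lambda>_. M)). \<bar>f Z\<bar> \<le> B"
    and fc: "bounded_differences M n c f" and \<epsilon>: "\<epsilon> > 0"
  shows "measure (PiM {..<n} (\<lambda>_. M))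
           {Z \<in> space (PiM {..<n} (\<lambda>_. M)). \<epsilon> \<le> \<bar>f Z - (\<integral>Z'. f Z' \<partial>PiM {..<n} (\<lambda>_. M))\<bar>}
         \<le> 2 * exp (- 2 * \<epsilon>\<^sup>2 / (real n * c\<^sup>2))"
proof -
  let ?P = "PiM {..<n} (\<lambda>_. M)"
  interpret P: prob_space ?P by (intro prob_space_PiM) unfold_locales
  define E where "E = (\<integral>Z'. f Z' \<partial>?P)"
  have "bounded_differences M n c (\<lambda>Z. - f Z)"
    using fc by (simp add: bounded_differences_def abs_minus_commute)
  from mcdiarmid_upper_tail[OF _ _ this \<epsilon>, of B] f fB
  have lower: "measure ?P {Z \<in> space ?P. \<epsilon> \<le> E - f Z} \<le> exp (- 2 * \<epsilon>\<^sup>2 / (real n * c\<^sup>2))"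
    by (simp add: E_def)
  have "{Z \<in> space ?P. \<epsilon> \<le> \<bar>f Z - E\<bar>} = {Z \<in> space ?P. \<epsilon> \<le> f Z - E} \<union> {Z \<in> space ?P. \<epsilon> \<le> E - f Z}"
    by auto
  then have "measure ?P {Z \<in> space ?P. \<epsilon> \<le> \<bar>f Z - E\<bar>}
      \<le> measure ?P {Z \<in> space ?P. \<epsilon> \<le> f Z - E} + measure ?P {Z \<in> space ?P. \<epsilon> \<le> E - f Z}"
    by (simp only:) (rule measure_Un_le; use f in measurable)
  with mcdiarmid_upper_tail[OF f fB fc \<epsilon>] lower show ?thesis by (simp add: E_def)
qed

end

lemma (in prob_space) deviation_prob_cong_AE:
  fixes f g :: "'a \<Rightarrow> real"
  assumes f: "f \<in> borel_measurable M" and g: "g \<in> borel_measurable M" and fg: "AE x in M. f x = g x"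
  shows "prob {x \<in> space M. \<epsilon> \<le> \<bar>f x - expectation f\<bar>} = prob {x \<in> space M. \<epsilon> \<le> \<bar>g x - expectation g\<bar>}"
proof -
  have "expectation f = expectation g" by (rule integral_cong_AE[OF f g fg])
  then show ?thesis
    by (intro measure_eq_AE) (use fg f g in \<open>auto elim: eventually_mono\<close>)
qed

section \<open>Finite kernel combinations and the RKHS\<close>

lemma sum_lessThan_add: "(\<Sum>i<m + n. f i) = (\<Sum>i<m. f i) + (\<Sum>i<n. f (m + i :: nat))"
  by (induction n) (simp_all add: add.assoc)

text \<open>A triple \<open>(m, c, a)\<close> stands for the kernel combination \<open>\<Sum>i<m. a i K(c i, \<cdot>)\<close>;
  \<open>kinner K\<close> is the inner product these combinations inherit from the RKHS.\<close>

definition kinner :: "('a \<Rightarrow> 'a \<Rightarrow> real) \<Rightarrow> nat \<times> (nat \<Rightarrow> 'a) \<times> (nat \<Rightarrow> real)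
    \<Rightarrow> nat \<times> (nat \<Rightarrow> 'a) \<times> (nat \<Rightarrow> real) \<Rightarrow> real" where
  "kinner K r1 r2 = (case r1 of (m1, c1, a1) \<Rightarrow> case r2 of (m2, c2, a2) \<Rightarrow>
      (\<Sum>i<m1. \<Sum>j<m2. a1 i * a2 j * K (c1 i) (c2 j)))"

definition kcomb :: "real \<Rightarrow> nat \<times> (nat \<Rightarrow> 'a) \<times> (nat \<Rightarrow> real)
    \<Rightarrow> real \<Rightarrow> nat \<times> (nat \<Rightarrow> 'a) \<times> (nat \<Rightarrow> real) \<Rightarrow> nat \<times> (nat \<Rightarrow> 'a) \<times> (nat \<Rightarrow> real)" where
  "kcomb u r1 v r2 = (case r1 of (m1, c1, a1) \<Rightarrow> case r2 of (m2, c2, a2) \<Rightarrow>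
      (m1 + m2, \<lambda>i. if i < m1 then c1 i else c2 (i - m1),
                \<lambda>i. if i < m1 then u * a1 i else v * a2 (i - m1)))"

definition kpoint :: "'a \<Rightarrow> nat \<times> (nat \<Rightarrow> 'a) \<times> (nat \<Rightarrow> real)" where
  "kpoint x = (1, \<lambda>_. x, \<lambda>_. 1)"

definition centres_in :: "'a set \<Rightarrow> nat \<times> (nat \<Rightarrow> 'a) \<times> (nat \<Rightarrow> real) \<Rightarrow> bool" where
  "centres_in X r \<longleftrightarrow> (\<forall>i<fst r. fst (snd r) i \<in> X)"

lemma kgram_eq_kinner: "kgram K r = kinner K r r"
  by (simp add: kgram_def kinner_def split: prod.splits)

lemma kdist2_eq_kinner: "kdist2 K r1 r2 = kinner K r1 r1 + kinner K r2 r2 - 2 * kinner K r1 r2"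
  by (simp add: kdist2_def kinner_def split: prod.splits)

lemma kfun_eq_kinner: "kfun K r x = kinner K r (kpoint x)"
  by (simp add: kfun_def kinner_def kpoint_def split: prod.splits)

lemma kinner_kpoint: "kinner K (kpoint x) (kpoint x) = K x x"
  by (simp add: kinner_def kpoint_def)

lemma kinner_kcomb_left: "kinner K (kcomb u r1 v r2) r3 = u * kinner K r1 r3 + v * kinner K r2 r3"
proof -
  obtain m1 c1 a1 m2 c2 a2 m3 c3 a3 where "r1 = (m1, c1, a1)" "r2 = (m2, c2, a2)" "r3 = (m3, c3, a3)"
    by (metis prod.exhaust)
  then show ?thesis
    by (simp add: kinner_def kcomb_def sum_lessThan_add sum_distrib_left algebra_simps)
qed

lemma kinner_kcomb_right: "kinner K r3 (kcomb u r1 v r2) = u * kinner K r3 r1 + v * kinner K r3 r2"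
proof -
  obtain m1 c1 a1 m2 c2 a2 m3 c3 a3 where "r1 = (m1, c1, a1)" "r2 = (m2, c2, a2)" "r3 = (m3, c3, a3)"
    by (metis prod.exhaust)
  then show ?thesis
    by (simp add: kinner_def kcomb_def sum_lessThan_add sum_distrib_left sum.distrib algebra_simps)
qed

lemma centres_in_kcomb: "centres_in X r1 \<Longrightarrow> centres_in X r2 \<Longrightarrow> centres_in X (kcomb u r1 v r2)"
  by (auto simp: centres_in_def kcomb_def split: prod.splits)

lemma centres_in_kpoint: "x \<in> X \<Longrightarrow> centres_in X (kpoint x)"
  by (simp add: centres_in_def kpoint_def)

lemma rkhs_approx_zero: "rkhs_approx X K (\<lambda>_. 0) (\<lambda>_. (0, \<lambda>_. undefined, \<lambda>_. 0))"
  by (simp add: rkhs_approx_def kdist2_def kfun_def)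

context
  fixes X :: "'a::topological_space set" and K :: "'a \<Rightarrow> 'a \<Rightarrow> real"
  assumes mercer: "mercer_kernel X K"
begin

lemma kinner_commute:
  assumes "centres_in X r1" "centres_in X r2"
  shows "kinner K r2 r1 = kinner K r1 r2"
proof -
  obtain m1 c1 a1 m2 c2 a2 where r: "r1 = (m1, c1, a1)" "r2 = (m2, c2, a2)"
    by (metis prod.exhaust)
  have "\<forall>x\<in>X. \<forall>y\<in>X. K x y = K y x" using mercer by (simp add: mercer_kernel_def)
  then have "(\<Sum>j<m1. \<Sum>i<m2. a2 i * a1 j * K (c2 i) (c1 j)) = (\<Sum>j<m1. \<Sum>i<m2. a1 j * a2 i * K (c1 j) (c2 i))"
    using assms by (intro sum.cong refl) (auto simp: r centres_in_def)
  then show ?thesis by (simp add: r kinner_def sum.swap[of _ "{..<m2}"])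
qed

lemma kinner_self_nonneg: "centres_in X r \<Longrightarrow> kinner K r r \<ge> 0"
  using mercer by (cases r) (auto simp: mercer_kernel_def centres_in_def simp flip: kgram_eq_kinner)

lemma kernel_diag_nonneg: "x \<in> X \<Longrightarrow> K x x \<ge> 0"
  using kinner_self_nonneg[OF centres_in_kpoint] by (simp add: kinner_kpoint)

lemma kinner_Cauchy_Schwarz:
  assumes c1: "centres_in X r1" and c2: "centres_in X r2"
  shows "\<bar>kinner K r1 r2\<bar> \<le> sqrt (kinner K r1 r1) * sqrt (kinner K r2 r2)"
proof -
  define g1 g2 h where "g1 = kinner K r1 r1" and "g2 = kinner K r2 r2" and "h = kinner K r1 r2"
  have q: "0 \<le> t\<^sup>2 * g1 + 2 * t * h + g2" for t
  proof -
    have "0 \<le> kinner K (kcomb t r1 1 r2) (kcomb t r1 1 r2)"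
      by (rule kinner_self_nonneg[OF centres_in_kcomb[OF c1 c2]])
    also have "\<dots> = t\<^sup>2 * g1 + 2 * t * h + g2"
      using kinner_commute[OF c1 c2]
      by (simp add: kinner_kcomb_left kinner_kcomb_right g1_def g2_def h_def algebra_simps power2_eq_square)
    finally show ?thesis .
  qed
  have "h\<^sup>2 \<le> g1 * g2"
  proof (cases "g1 = 0")
    case True
    have "h = 0"
    proof (rule ccontr)
      assume "h \<noteq> 0"
      with q[of "- (g2 + 1) / (2 * h)"] True show False by (simp add: field_simps)
    qed
    then show ?thesis using True by simp
  next
    case False
    then have "g1 > 0" using kinner_self_nonneg[OF c1] by (simp add: g1_def)
    with q[of "- h / g1"] show ?thesis by (simp add: field_simps power2_eq_square)
  qed
  then have "sqrt (h\<^sup>2) \<le> sqrt (g1 * g2)" by (rule real_sqrt_le_mono)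
  then show ?thesis by (simp add: g1_def g2_def h_def real_sqrt_mult)
qed

lemma kfun_abs_le:
  "centres_in X r \<Longrightarrow> x \<in> X \<Longrightarrow> \<bar>kfun K r x\<bar> \<le> sqrt (kgram K r) * sqrt (K x x)"
  using kinner_Cauchy_Schwarz[OF _ centres_in_kpoint]
  by (simp add: kfun_eq_kinner kgram_eq_kinner kinner_kpoint)

lemma kdist2_eq_kinner_kcomb:
  assumes "centres_in X r1" "centres_in X r2"
  shows "kdist2 K r1 r2 = kinner K (kcomb 1 r1 (-1) r2) (kcomb 1 r1 (-1) r2)"
  using kinner_commute[OF assms]
  by (simp add: kdist2_eq_kinner kinner_kcomb_left kinner_kcomb_right algebra_simps)

lemma kdist2_nonneg: "centres_in X r1 \<Longrightarrow> centres_in X r2 \<Longrightarrow> kdist2 K r1 r2 \<ge> 0"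
  by (simp add: kdist2_eq_kinner_kcomb kinner_self_nonneg centres_in_kcomb)

lemma kfun_diff_abs_le:
  assumes c1: "centres_in X r1" and c2: "centres_in X r2" and x: "x \<in> X"
  shows "\<bar>kfun K r1 x - kfun K r2 x\<bar> \<le> sqrt (kdist2 K r1 r2) * sqrt (K x x)"
  using kinner_Cauchy_Schwarz[OF centres_in_kcomb[OF c1 c2] centres_in_kpoint[OF x], of 1 "-1"]
  by (simp add: kfun_eq_kinner kinner_kcomb_left kdist2_eq_kinner_kcomb[OF c1 c2] kinner_kpoint)

lemma sqrt_kgram_diff_le:
  assumes c1: "centres_in X r1" and c2: "centres_in X r2"
  shows "\<bar>sqrt (kgram K r1) - sqrt (kgram K r2)\<bar> \<le> sqrt (kdist2 K r1 r2)"
proof -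
  define a b where "a = sqrt (kgram K r1)" and "b = sqrt (kgram K r2)"
  have "kgram K r1 \<ge> 0" "kgram K r2 \<ge> 0"
    using kinner_self_nonneg[OF c1] kinner_self_nonneg[OF c2] by (simp_all add: kgram_eq_kinner)
  then have "kdist2 K r1 r2 = a\<^sup>2 + b\<^sup>2 - 2 * kinner K r1 r2"
    by (simp add: kdist2_eq_kinner a_def b_def kgram_eq_kinner)
  moreover have "kinner K r1 r2 \<le> a * b"
    using kinner_Cauchy_Schwarz[OF c1 c2] by (simp add: a_def b_def kgram_eq_kinner)
  ultimately have "(a - b)\<^sup>2 \<le> kdist2 K r1 r2" by (simp add: power2_eq_square algebra_simps)
  then show ?thesis using real_sqrt_le_mono by (fastforce simp: a_def b_def)
qed

lemma rkhs_approx_centres_in: "rkhs_approx X K f s \<Longrightarrow> centres_in X (s k)"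
  by (simp add: rkhs_approx_def centres_in_def)

lemma rkhs_approx_sqrt_kgram_convergent:
  assumes s: "rkhs_approx X K f s"
  shows "convergent (\<lambda>k. sqrt (kgram K (s k)))"
  unfolding Cauchy_convergent_iff[symmetric]
proof (rule CauchyI)
  fix e :: real assume e: "e > 0"
  then obtain N where N: "\<forall>k\<ge>N. \<forall>l\<ge>N. kdist2 K (s k) (s l) < e\<^sup>2"
    using s unfolding rkhs_approx_def by (meson zero_less_power)
  have "norm (sqrt (kgram K (s k)) - sqrt (kgram K (s l))) < e" if "N \<le> k" "N \<le> l" for k l
  proof -
    have "sqrt (kdist2 K (s k) (s l)) < e"
      using N that e real_sqrt_less_mono[of _ "e\<^sup>2"] by fastforce
    with sqrt_kgram_diff_le[OF rkhs_approx_centres_in[OF s] rkhs_approx_centres_in[OF s]]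
    show ?thesis by (smt (verit) real_norm_def)
  qed
  then show "\<exists>N. \<forall>k\<ge>N. \<forall>l\<ge>N. norm (sqrt (kgram K (s k)) - sqrt (kgram K (s l))) < e" by blast
qed

lemma abs_le_rkhs_norm:
  assumes f: "in_rkhs X K f" and x: "x \<in> X"
  shows "\<bar>f x\<bar> \<le> rkhs_norm X K f * sqrt (K x x)"
proof -
  define L where "L = {L. \<exists>s. rkhs_approx X K f s \<and> (\<lambda>k. sqrt (kgram K (s k))) \<longlonglongrightarrow> L}"
  have bound: "\<bar>f x\<bar> \<le> l * sqrt (K x x)" if "l \<in> L" for l
  proof -
    obtain s where s: "rkhs_approx X K f s" and l: "(\<lambda>k. sqrt (kgram K (s k))) \<longlonglongrightarrow> l"
      using \<open>l \<in> L\<close> by (auto simp: L_def)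
    have "(\<lambda>k. \<bar>kfun K (s k) x\<bar>) \<longlonglongrightarrow> \<bar>f x\<bar>"
      using s x unfolding rkhs_approx_def by (auto intro: tendsto_rabs)
    then show ?thesis
      by (rule LIMSEQ_le[OF _ tendsto_mult_right[OF l]])
         (use kfun_abs_le[OF rkhs_approx_centres_in[OF s] x] in auto)
  qed
  obtain s where s: "rkhs_approx X K f s" using f by (auto simp: in_rkhs_def)
  then have "L \<noteq> {}"
    using rkhs_approx_sqrt_kgram_convergent[OF s] by (auto simp: L_def convergent_def)
  show ?thesis
  proof (cases "K x x = 0")
    case False
    then have kx: "sqrt (K x x) > 0" using kernel_diag_nonneg[OF x] by simp
    have "\<bar>f x\<bar> / sqrt (K x x) \<le> Inf L"
      by (rule cInf_greatest[OF \<open>L \<noteq> {}\<close>]) (use bound kx in \<open>auto simp: divide_le_eq\<close>)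
    then show ?thesis using kx by (simp add: rkhs_norm_def L_def[symmetric] divide_le_eq)
  qed (use bound \<open>L \<noteq> {}\<close> in auto)
qed

lemma rkhs_norm_zero_le: "rkhs_norm X K (\<lambda>_. 0) \<le> 0"
  unfolding rkhs_norm_def
proof (rule cInf_lower)
  show "0 \<in> {L. \<exists>s. rkhs_approx X K (\<lambda>_. 0) s \<and> (\<lambda>k. sqrt (kgram K (s k))) \<longlonglongrightarrow> L}"
    using rkhs_approx_zero by (fastforce simp: kgram_def)
  have "L \<ge> 0" if "rkhs_approx X K f s" "(\<lambda>k. sqrt (kgram K (s k))) \<longlonglongrightarrow> L" for f s L
    by (rule LIMSEQ_le_const[OF that(2)])
       (use kinner_self_nonneg[OF rkhs_approx_centres_in[OF that(1)]] in \<open>auto simp: kgram_eq_kinner\<close>)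
  then show "bdd_below {L. \<exists>s. rkhs_approx X K (\<lambda>_. 0) s \<and> (\<lambda>k. sqrt (kgram K (s k))) \<longlonglongrightarrow> L}"
    by (intro bdd_belowI[where m = 0]) blast
qed

lemma kernel_continuous_on_pair:
  assumes "continuous_on S g" "continuous_on S h" "\<And>x. x \<in> S \<Longrightarrow> g x \<in> X \<and> h x \<in> X"
  shows "continuous_on S (\<lambda>x. K (g x) (h x))"
  using continuous_on_compose2[OF conjunct1[OF mercer[unfolded mercer_kernel_def]]
      continuous_on_Pair[OF assms(1,2)]] assms(3)
  by auto

lemma kernel_continuous_on: "c \<in> X \<Longrightarrow> continuous_on X (K c)"
  using kernel_continuous_on_pair[OF continuous_on_const continuous_on_id] by auto

lemma kernel_diag_continuous_on: "continuous_on X (\<lambda>x. K x x)"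
  using kernel_continuous_on_pair[OF continuous_on_id continuous_on_id] by auto

lemma kfun_continuous_on: "centres_in X r \<Longrightarrow> continuous_on X (kfun K r)"
  by (cases r) (auto simp: kfun_def centres_in_def intro!: continuous_intros kernel_continuous_on)

lemma bdd_above_sqrt_kernel_diag: "compact X \<Longrightarrow> bdd_above ((\<lambda>x. sqrt (K x x)) ` X)"
  by (intro bounded_imp_bdd_above compact_imp_bounded compact_continuous_image continuous_intros
      kernel_diag_continuous_on)

text \<open>Pointwise \<open>\<bar>g x\<bar> \<le> \<parallel>g\<parallel>\<^sub>K \<surd>K(x,x)\<close> and the bounded kernel diagonal turn RKHS-Cauchy sequences
  into uniformly Cauchy ones.\<close>

lemma rkhs_approx_uniform_limit:
  assumes X: "compact X" and s: "rkhs_approx X K f s"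
  shows "uniform_limit X (\<lambda>i. kfun K (s i)) f sequentially"
proof (rule uniform_limitI)
  fix e :: real assume e: "e > 0"
  define k where "k = max (SUP x\<in>X. sqrt (K x x)) 0 + 1"
  have k: "k > 0" "\<And>x. x \<in> X \<Longrightarrow> sqrt (K x x) \<le> k"
    using cSUP_upper[OF _ bdd_above_sqrt_kernel_diag[OF X]] by (force simp: k_def)+
  with e have "(e / (2 * k))\<^sup>2 > 0" by simp
  then obtain N where N: "\<forall>i\<ge>N. \<forall>j\<ge>N. kdist2 K (s i) (s j) < (e / (2 * k))\<^sup>2"
    using s unfolding rkhs_approx_def by blast
  have "dist (kfun K (s i) x) (f x) < e" if i: "i \<ge> N" and x: "x \<in> X" for i x
  proof -
    have "\<bar>kfun K (s i) x - kfun K (s j) x\<bar> \<le> e / 2" if "j \<ge> N" for j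
    proof -
      have "sqrt (kdist2 K (s i) (s j)) \<le> e / (2 * k)"
        using N i that e k real_sqrt_le_mono[of _ "(e / (2 * k))\<^sup>2"] by fastforce
      then have "sqrt (kdist2 K (s i) (s j)) * sqrt (K x x) \<le> e / (2 * k) * k"
        using k(2)[OF x] kernel_diag_nonneg[OF x] e k(1)
        by (intro mult_mono) (auto intro: kdist2_nonneg rkhs_approx_centres_in[OF s])
      with k(1) kfun_diff_abs_le[OF rkhs_approx_centres_in[OF s] rkhs_approx_centres_in[OF s] x, of i j]
      show ?thesis by simp
    qed
    moreover have "(\<lambda>j. \<bar>kfun K (s i) x - kfun K (s j) x\<bar>) \<longlonglongrightarrow> \<bar>kfun K (s i) x - f x\<bar>"
      using s x unfolding rkhs_approx_def by (auto intro!: tendsto_intros)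
    ultimately have "\<bar>kfun K (s i) x - f x\<bar> \<le> e / 2"
      by (intro LIMSEQ_le_const2) auto
    then show ?thesis using e by (simp add: dist_real_def)
  qed
  then show "\<forall>\<^sub>F i in sequentially. \<forall>x\<in>X. dist (kfun K (s i) x) (f x) < e"
    by (auto intro: eventually_sequentiallyI)
qed

lemma in_rkhs_continuous_on:
  assumes X: "compact X" and f: "in_rkhs X K f"
  shows "continuous_on X f"
proof -
  obtain s where s: "rkhs_approx X K f s" using f by (auto simp: in_rkhs_def)
  from rkhs_approx_uniform_limit[OF X s] show ?thesis
    by (rule uniform_limit_theorem[rotated]) (use kfun_continuous_on[OF rkhs_approx_centres_in[OF s]] in auto)
qed

end

section \<open>The uniform deviation of the empirical error\<close>

lemma borel_measurable_cSUP_continuous_on: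
  fixes h :: "'f \<Rightarrow> 'a::topological_space \<Rightarrow> real"
  assumes A: "A \<in> sets borel" and cont: "\<And>f. f \<in> F \<Longrightarrow> continuous_on A (h f)"
    and ne: "F \<noteq> {}" and bdd: "\<And>x. x \<in> A \<Longrightarrow> bdd_above ((\<lambda>f. h f x) ` F)"
  shows "(\<lambda>x. SUP f\<in>F. h f x) \<in> borel_measurable (restrict_space borel A)"
proof (subst borel_measurable_iff_greater, intro allI)
  fix a :: real
  have eq: "{x \<in> A. a < (SUP f\<in>F. h f x)} = (\<Union>f\<in>F. A \<inter> h f -` {a<..})"
    using less_cSUP_iff[OF ne bdd] by auto
  have "openin (top_of_set A) (\<Union>f\<in>F. A \<inter> h f -` {a<..})"
    by (intro openin_Union) (auto intro!: continuous_openin_preimage_gen cont)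
  then obtain T where T: "open T" "(\<Union>f\<in>F. A \<inter> h f -` {a<..}) = A \<inter> T"
    by (auto simp: openin_open)
  have "A \<inter> T \<in> sets (restrict_space borel A)"
    using A T(1) by (subst sets_restrict_space_iff) auto
  moreover have "space (restrict_space borel A) = A" using A by simp
  ultimately show "{x \<in> space (restrict_space borel A). a < (SUP f\<in>F. h f x)} \<in> sets (restrict_space borel A)"
    by (simp only: eq T(2))
qed

lemma abs_cSUP_diff_le:
  fixes a b :: "'f \<Rightarrow> real"
  assumes ne: "F \<noteq> {}" and bdd: "bdd_above (a ` F)" "bdd_above (b ` F)"
    and diff: "\<And>f. f \<in> F \<Longrightarrow> \<bar>a f - b f\<bar> \<le> c"
  shows "\<bar>(SUP f\<in>F. a f) - (SUP f\<in>F. b f)\<bar> \<le> c"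
proof -
  have "(SUP f\<in>F. a f) \<le> (SUP f\<in>F. b f) + c"
    by (rule cSUP_least[OF ne]) (use diff cSUP_upper[OF _ bdd(2)] in fastforce)
  moreover have "(SUP f\<in>F. b f) \<le> (SUP f\<in>F. a f) + c"
    by (rule cSUP_least[OF ne]) (use diff cSUP_upper[OF _ bdd(1)] in fastforce)
  ultimately show ?thesis by linarith
qed

lemma weight_nonneg: "0 \<le> weight s x"
  by (simp add: weight_def)

lemma weight_le_one: "weight s x \<le> 1"
  by (simp add: weight_def divide_nonneg_nonneg)

lemma weight_continuous_on [continuous_intros]:
  "continuous_on S g \<Longrightarrow> continuous_on S (\<lambda>x. weight s (g x))"
  unfolding weight_def divide_inverse by (intro continuous_intros)

lemma emp_err_nonneg: "0 \<le> emp_err s n Z f"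
  unfolding emp_err_def by (intro mult_nonneg_nonneg sum_nonneg weight_nonneg zero_le_power2) simp_all

lemma (in prob_space) abs_integral_le_AE:
  fixes g :: "'a \<Rightarrow> real"
  assumes "AE x in M. \<bar>g x\<bar> \<le> C"
  shows "\<bar>integral\<^sup>L M g\<bar> \<le> C"
proof (cases "integrable M g")
  case True
  have "\<bar>integral\<^sup>L M g\<bar> \<le> (\<integral>x. \<bar>g x\<bar> \<partial>M)" by (rule integral_abs_bound)
  also have "\<dots> \<le> (\<integral>x. C \<partial>M)" by (rule integral_mono_AE) (use True assms in auto)
  finally show ?thesis by (simp add: prob_space)
next
  case False
  have "AE x in M. 0 \<le> C" using assms by (rule eventually_mono) auto
  with False show ?thesis by (simp add: not_integrable_integral_eq)
qed

definition map_labels :: "(real \<Rightarrow> real) \<Rightarrow> (nat \<Rightarrow> 'x \<times> real) \<Rightarrow> nat \<Rightarrow> 'x \<times> real" where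
  "map_labels \<psi> Z = (\<lambda>i. (fst (Z i), \<psi> (snd (Z i))))"

locale bounded_sampling = R: prob_space \<rho>
  for \<rho> :: "((real^'p) \<times> real) measure" +
  fixes X :: "(real^'p) set" and K :: "real^'p \<Rightarrow> real^'p \<Rightarrow> real" and M r :: real
  assumes compact_X: "compact X" and mercer: "mercer_kernel X K"
    and sets_\<rho>: "sets \<rho> = sets (restrict_space borel (X \<times> UNIV))"
    and bounded_labels: "AE z in \<rho>. \<bar>snd z\<bar> \<le> M" and r_pos: "r > 0"
begin

definition B :: real where "B = M + kappa X K * diameter X * r"

lemma space_\<rho>: "space \<rho> = X \<times> UNIV"
  using sets_eq_imp_space_eq[OF sets_\<rho>] by (simp add: space_restrict_space)

lemma M_nonneg: "M \<ge> 0"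
proof -
  have "AE z in \<rho>. 0 \<le> M" using bounded_labels by (rule eventually_mono) auto
  then show ?thesis by simp
qed

lemma X_nonempty: "X \<noteq> {}"
  using R.not_empty by (auto simp: space_\<rho>)

lemma sqrt_kernel_diag_le_kappa: "x \<in> X \<Longrightarrow> sqrt (K x x) \<le> kappa X K"
  unfolding kappa_def by (rule cSUP_upper[OF _ bdd_above_sqrt_kernel_diag[OF mercer compact_X]])

lemma kappa_nonneg: "kappa X K \<ge> 0"
proof -
  obtain x where "x \<in> X" using X_nonempty by blast
  then show ?thesis
    using sqrt_kernel_diag_le_kappa kernel_diag_nonneg[OF mercer] by (meson order.trans real_sqrt_ge_zero)
qed

lemma zero_in_F_ball: "(\<lambda>_ _. 0) \<in> F_ball X K r"
proof -
  have "real CARD('p) * rkhs_norm X K (\<lambda>_. 0) \<le> 0"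
    by (rule mult_nonneg_nonpos) (simp_all add: rkhs_norm_zero_le[OF mercer])
  then show ?thesis
    using rkhs_approx_zero r_pos by (auto simp: F_ball_def in_rkhs_def)
qed

lemma norm_vapp_le:
  assumes f: "f \<in> F_ball X K r" and x: "x \<in> X"
  shows "norm (vapp f x) \<le> kappa X K * r"
proof -
  have "norm (vapp f x) \<le> (\<Sum>j\<in>UNIV. \<bar>f j x\<bar>)"
    using norm_le_l1_cart[of "vapp f x"] by (simp add: vapp_def)
  also have "\<dots> \<le> (\<Sum>j\<in>UNIV. rkhs_norm X K (f j)) * sqrt (K x x)"
    unfolding sum_distrib_right
    by (intro sum_mono abs_le_rkhs_norm[OF mercer _ x]) (use f in \<open>auto simp: F_ball_def\<close>)
  also have "\<dots> \<le> r * kappa X K"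
    using f kernel_diag_nonneg[OF mercer x] sqrt_kernel_diag_le_kappa[OF x] r_pos
    by (intro mult_mono) (auto simp: F_ball_def)
  finally show ?thesis by (simp add: mult.commute)
qed

lemma loss_term_le:
  assumes f: "f \<in> F_ball X K r" and "x \<in> X" "u \<in> X"
  shows "weight s w * (y - v + vapp f x \<bullet> (u - x))\<^sup>2 \<le> (\<bar>y\<bar> + \<bar>v\<bar> + kappa X K * diameter X * r)\<^sup>2"
proof -
  have "\<bar>vapp f x \<bullet> (u - x)\<bar> \<le> norm (vapp f x) * norm (u - x)" by (rule Cauchy_Schwarz_ineq2)
  also have "\<dots> \<le> kappa X K * r * diameter X"
    using norm_vapp_le[OF f \<open>x \<in> X\<close>] kappa_nonneg r_pos
      diameter_bounded_bound[OF compact_imp_bounded[OF compact_X] \<open>u \<in> X\<close> \<open>x \<in> X\<close>]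
    by (intro mult_mono) (auto simp: dist_norm)
  finally have "(y - v + vapp f x \<bullet> (u - x))\<^sup>2 \<le> (\<bar>y\<bar> + \<bar>v\<bar> + kappa X K * diameter X * r)\<^sup>2"
    by (intro power2_le_iff_abs_le[THEN iffD2]) (auto simp: mult_ac)
  then show ?thesis
    using weight_le_one[of s w] by (smt (verit) mult_left_le_one_le zero_le_power2 weight_nonneg)
qed

lemma loss_term_le_B:
  assumes "f \<in> F_ball X K r" "x \<in> X" "u \<in> X" "\<bar>y\<bar> \<le> M" "\<bar>v\<bar> \<le> M"
  shows "weight s w * (y - v + vapp f x \<bullet> (u - x))\<^sup>2 \<le> 4 * B\<^sup>2"
proof -
  define D where "D = kappa X K * diameter X * r"
  have "0 \<le> D"
    using kappa_nonneg r_pos diameter_ge_0[OF compact_imp_bounded[OF compact_X]] by (simp add: D_def)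
  then have "(\<bar>y\<bar> + \<bar>v\<bar> + D)\<^sup>2 \<le> (2 * B)\<^sup>2"
    using assms(4,5) by (intro power_mono) (auto simp: B_def D_def[symmetric])
  then show ?thesis
    using loss_term_le[OF assms(1-3), of s w y v] by (simp add: D_def power_mult_distrib)
qed

lemma exp_err_abs_le:
  assumes f: "f \<in> F_ball X K r"
  shows "\<bar>exp_err s \<rho> f\<bar> \<le> 4 * B\<^sup>2"
  unfolding exp_err_def
proof (rule R.abs_integral_le_AE)
  have "AE z in \<rho>. z \<in> X \<times> UNIV \<and> \<bar>snd z\<bar> \<le> M"
    using bounded_labels by (auto simp: space_\<rho>[symmetric])
  then show "AE z in \<rho>. \<bar>\<integral>w. weight s (fst z - fst w) *
      (snd z - snd w + vapp f (fst z) \<bullet> (fst w - fst z))\<^sup>2 \<partial>\<rho>\<bar> \<le> 4 * B\<^sup>2"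
  proof eventually_elim
    case (elim z)
    have "AE w in \<rho>. w \<in> X \<times> UNIV \<and> \<bar>snd w\<bar> \<le> M"
      using bounded_labels by (auto simp: space_\<rho>[symmetric])
    then show ?case
      by (intro R.abs_integral_le_AE, eventually_elim)
         (use elim loss_term_le_B[OF f] in \<open>auto simp: abs_mult abs_of_nonneg weight_nonneg\<close>)
  qed
qed

lemma emp_err_le:
  assumes f: "f \<in> F_ball X K r" and Z: "\<forall>i<n. fst (Z i) \<in> X \<and> \<bar>snd (Z i)\<bar> \<le> M"
  shows "emp_err s n Z f \<le> 4 * B\<^sup>2"
proof -
  have "emp_err s n Z f \<le> (1 / (real n)\<^sup>2) * (\<Sum>i<n. \<Sum>j<n. 4 * B\<^sup>2)"
    unfolding emp_err_def by (intro mult_left_mono sum_mono loss_term_le_B[OF f]) (use Z in auto)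
  also have "\<dots> \<le> 4 * B\<^sup>2"
    by (cases "n = 0") (auto simp: power2_eq_square)
  finally show ?thesis .
qed

lemma bdd_above_emp_deviation:
  assumes Z: "\<forall>i<n. fst (Z i) \<in> X"
  shows "bdd_above ((\<lambda>f. \<bar>emp_err s n Z f - exp_err s \<rho> f\<bar>) ` F_ball X K r)"
proof (rule bdd_aboveI2)
  fix f assume f: "f \<in> F_ball X K r"
  have "emp_err s n Z f \<le> (1 / (real n)\<^sup>2) *
      (\<Sum>i<n. \<Sum>j<n. (\<bar>snd (Z i)\<bar> + \<bar>snd (Z j)\<bar> + kappa X K * diameter X * r)\<^sup>2)"
    unfolding emp_err_def by (intro mult_left_mono sum_mono loss_term_le[OF f]) (use Z in auto)
  with emp_err_nonneg[of s n Z f] exp_err_abs_le[OF f, of s]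
  show "\<bar>emp_err s n Z f - exp_err s \<rho> f\<bar> \<le> (1 / (real n)\<^sup>2) *
      (\<Sum>i<n. \<Sum>j<n. (\<bar>snd (Z i)\<bar> + \<bar>snd (Z j)\<bar> + kappa X K * diameter X * r)\<^sup>2) + 4 * B\<^sup>2"
    by linarith
qed

lemma closed_samples_in_X: "closed {W :: nat \<Rightarrow> (real^'p) \<times> real. \<forall>i<n. fst (W i) \<in> X}"
proof -
  have "closed ((\<lambda>W :: nat \<Rightarrow> (real^'p) \<times> real. fst (W i)) -` X)" for i
    by (rule closed_vimage[OF compact_imp_closed[OF compact_X]])
       (auto intro!: continuous_intros continuous_on_product_coordinates)
  moreover have "{W :: nat \<Rightarrow> (real^'p) \<times> real. \<forall>i<n. fst (W i) \<in> X}
      = (\<Inter>i\<in>{..<n}. (\<lambda>W. fst (W i)) -` X)"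
    by auto
  ultimately show ?thesis by auto
qed

lemma measurable_samples:
  fixes n :: nat
  shows "(\<lambda>Z. Z) \<in> PiM {..<n} (\<lambda>_. \<rho>) \<rightarrow>\<^sub>M restrict_space borel {W. \<forall>i<n. fst (W i) \<in> X}"
proof (rule measurable_restrict_space2)
  show "(\<lambda>Z. Z) \<in> space (PiM {..<n} (\<lambda>_. \<rho>)) \<rightarrow> {W. \<forall>i<n. fst (W i) \<in> X}"
    by (auto simp: space_PiM space_\<rho> PiE_def Pi_def)
  have \<rho>_borel: "(\<lambda>z. z) \<in> \<rho> \<rightarrow>\<^sub>M borel"
    by (subst measurable_cong_sets[OF sets_\<rho> refl]) (rule measurable_restrict_space1, simp)
  show "(\<lambda>Z. Z) \<in> borel_measurable (PiM {..<n} (\<lambda>_. \<rho>))"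
  proof (rule measurable_coordinatewise_then_product)
    fix i
    show "(\<lambda>Z. Z i) \<in> borel_measurable (PiM {..<n} (\<lambda>_. \<rho>))"
    proof (cases "i < n")
      case True
      then show ?thesis
        using measurable_comp[OF measurable_component_singleton[of i "{..<n}" "\<lambda>_. \<rho>"] \<rho>_borel]
        by (simp add: comp_def)
    next
      case False
      have "(\<lambda>_. undefined) \<in> borel_measurable (PiM {..<n} (\<lambda>_. \<rho>))" by simp
      then show ?thesis
        by (rule measurable_cong[THEN iffD1, rotated]) (use False in \<open>auto simp: space_PiM PiE_def extensional_def\<close>)
    qed
  qed
qed

lemma emp_deviation_continuous_on:
  assumes f: "f \<in> F_ball X K r" and \<psi>: "continuous_on UNIV \<psi>"
  shows "continuous_on {W. \<forall>i<n. fst (W i) \<in> X} (\<lambda>W. \<bar>emp_err s n (map_labels \<psi> W) f - exp_err s \<rho> f\<bar>)"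
proof -
  let ?A = "{W :: nat \<Rightarrow> (real^'p) \<times> real. \<forall>i<n. fst (W i) \<in> X}"
  have coord: "continuous_on ?A (\<lambda>W. W i)" for i
    by (rule continuous_on_subset[OF continuous_on_product_coordinates]) auto
  have f_cont: "continuous_on X (f j)" for j
    by (rule in_rkhs_continuous_on[OF mercer compact_X]) (use f in \<open>auto simp: F_ball_def\<close>)
  have vapp: "continuous_on ?A (\<lambda>W. vapp f (fst (W i)))" if "i < n" for i
    unfolding vapp_def
  proof (intro continuous_on_vec_lambda)
    show "continuous_on ?A (\<lambda>W. f j (fst (W i)))" for j
      by (rule continuous_on_compose2[OF f_cont]) (use that in \<open>auto intro!: continuous_intros coord\<close>)
  qed
  have label: "continuous_on ?A (\<lambda>W. \<psi> (snd (W i)))" for i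
    by (rule continuous_on_compose2[OF \<psi>]) (auto intro!: continuous_intros coord)
  show ?thesis
    unfolding emp_err_def map_labels_def by (intro continuous_intros coord label) (auto intro!: vapp)
qed

text \<open>\<open>S_dev\<close> is a supremum over an uncountable class, but every member depends continuously on the
  sample, so the supremum is lower semicontinuous.\<close>

lemma S_dev_map_labels_measurable:
  assumes \<psi>: "continuous_on UNIV \<psi>"
  shows "(\<lambda>Z. S_dev X K s \<rho> n r (map_labels \<psi> Z)) \<in> borel_measurable (PiM {..<n} (\<lambda>_. \<rho>))"
proof -
  have "(\<lambda>W. SUP f\<in>F_ball X K r. \<bar>emp_err s n (map_labels \<psi> W) f - exp_err s \<rho> f\<bar>)
      \<in> borel_measurable (restrict_space borel {W. \<forall>i<n. fst (W i) \<in> X})"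
  proof (rule borel_measurable_cSUP_continuous_on)
    show "{W :: nat \<Rightarrow> (real^'p) \<times> real. \<forall>i<n. fst (W i) \<in> X} \<in> sets borel"
      using closed_samples_in_X by (rule borel_closed)
    show "F_ball X K r \<noteq> {}" using zero_in_F_ball by blast
    show "continuous_on {W. \<forall>i<n. fst (W i) \<in> X}
        (\<lambda>W. \<bar>emp_err s n (map_labels \<psi> W) f - exp_err s \<rho> f\<bar>)" if "f \<in> F_ball X K r" for f
      by (rule emp_deviation_continuous_on[OF that \<psi>])
    show "bdd_above ((\<lambda>f. \<bar>emp_err s n (map_labels \<psi> W) f - exp_err s \<rho> f\<bar>) ` F_ball X K r)"
      if "W \<in> {W. \<forall>i<n. fst (W i) \<in> X}" for W
      by (rule bdd_above_emp_deviation) (use that in \<open>simp add: map_labels_def\<close>)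
  qed
  from measurable_comp[OF measurable_samples this] show ?thesis by (simp add: comp_def S_dev_def)
qed

lemma S_dev_measurable: "S_dev X K s \<rho> n r \<in> borel_measurable (PiM {..<n} (\<lambda>_. \<rho>))"
  using S_dev_map_labels_measurable[OF continuous_on_id] by (simp add: map_labels_def)

text \<open>The bound \<open>\<bar>y\<bar> \<le> M\<close> holds only almost surely, so McDiarmid's inequality is applied to the
  deviation of the sample with labels clipped to \<open>[-M, M]\<close>: it agrees with \<open>S_dev\<close> almost surely
  and has bounded differences everywhere.\<close>

definition clip :: "real \<Rightarrow> real" where
  "clip y = max (- M) (min M y)"

lemma continuous_on_clip: "continuous_on UNIV clip"
  unfolding clip_def by (intro continuous_intros)

lemma clipped_sample_bounded:
  assumes "Z \<in> space (PiM {..<n} (\<lambda>_. \<rho>))"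
  shows "\<forall>i<n. fst (map_labels clip Z i) \<in> X \<and> \<bar>snd (map_labels clip Z i)\<bar> \<le> M"
  using assms M_nonneg by (auto simp: map_labels_def clip_def space_PiM space_\<rho> PiE_def Pi_def)

lemma emp_err_update_le:
  assumes f: "f \<in> F_ball X K r" and k: "k < n"
    and Z: "\<forall>i<n. fst (Z i) \<in> X \<and> \<bar>snd (Z i)\<bar> \<le> M" and p: "fst p \<in> X" "\<bar>snd p\<bar> \<le> M"
  shows "\<bar>emp_err s n (Z(k := p)) f - emp_err s n Z f\<bar> \<le> 8 * B\<^sup>2 / real n"
proof -
  define t where "t (Z' :: nat \<Rightarrow> (real^'p) \<times> real) i j = weight s (fst (Z' j) - fst (Z' i)) *
      (snd (Z' i) - snd (Z' j) + vapp f (fst (Z' i)) \<bullet> (fst (Z' j) - fst (Z' i)))\<^sup>2" for Z' i j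
  define Q where "Q = 4 * B\<^sup>2"
  have t_bounds: "0 \<le> t Z' i j \<and> t Z' i j \<le> Q"
    if "\<forall>i<n. fst (Z' i) \<in> X \<and> \<bar>snd (Z' i)\<bar> \<le> M" "i < n" "j < n" for Z' i j
    unfolding t_def Q_def using that
    by (intro conjI mult_nonneg_nonneg weight_nonneg zero_le_power2 loss_term_le_B[OF f]) auto
  have "\<bar>t (Z(k := p)) i j - t Z i j\<bar> \<le> (if i = k then Q else 0) + (if j = k then Q else 0)"
    if "i < n" "j < n" for i j
  proof (cases "i = k \<or> j = k")
    case True
    have "\<forall>i<n. fst ((Z(k := p)) i) \<in> X \<and> \<bar>snd ((Z(k := p)) i)\<bar> \<le> M" using Z p by auto
    from t_bounds[OF this that] t_bounds[OF Z that]
    have "\<bar>t (Z(k := p)) i j - t Z i j\<bar> \<le> Q" unfolding abs_le_iff by linarith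
    moreover have "Q \<ge> 0" by (simp add: Q_def)
    ultimately show ?thesis using True by auto
  qed (simp add: t_def)
  then have "\<bar>\<Sum>i<n. \<Sum>j<n. t (Z(k := p)) i j - t Z i j\<bar>
      \<le> (\<Sum>i<n. \<Sum>j<n. (if i = k then Q else 0) + (if j = k then Q else 0))"
    by (intro order.trans[OF sum_abs] sum_mono order.trans[OF sum_abs]) auto
  also have "\<dots> = 2 * real n * Q"
    using k by (simp add: sum.distrib flip: sum_distrib_left)
  finally have sum_le: "\<bar>\<Sum>i<n. \<Sum>j<n. t (Z(k := p)) i j - t Z i j\<bar> \<le> 2 * real n * Q" .
  have "emp_err s n (Z(k := p)) f - emp_err s n Z f = (1 / (real n)\<^sup>2) * (\<Sum>i<n. \<Sum>j<n. t (Z(k := p)) i j - t Z i j)"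
    unfolding emp_err_def t_def by (simp add: sum_subtractf right_diff_distrib)
  also have "\<bar>\<dots>\<bar> \<le> (1 / (real n)\<^sup>2) * (2 * real n * Q)"
    unfolding abs_mult using sum_le by (simp add: divide_right_mono)
  also have "\<dots> = 8 * B\<^sup>2 / real n"
    using k by (simp add: Q_def power2_eq_square)
  finally show ?thesis .
qed

lemma bounded_differences_S_dev_clip:
  "bounded_differences \<rho> n (8 * B\<^sup>2 / real n) (\<lambda>Z. S_dev X K s \<rho> n r (map_labels clip Z))"
  unfolding bounded_differences_def
proof (intro ballI allI impI)
  fix Z k w assume Z: "Z \<in> space (PiM {..<n} (\<lambda>_. \<rho>))" and k: "k < n" and w: "w \<in> space \<rho>"
  let ?Z = "map_labels clip Z" and ?p = "(fst w, clip (snd w))"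
  have Z': "\<forall>i<n. fst (?Z i) \<in> X \<and> \<bar>snd (?Z i)\<bar> \<le> M" by (rule clipped_sample_bounded[OF Z])
  have p: "fst ?p \<in> X" "\<bar>snd ?p\<bar> \<le> M"
    using w M_nonneg by (auto simp: space_\<rho> clip_def)
  have "map_labels clip (Z(k := w)) = ?Z(k := ?p)" by (auto simp: map_labels_def)
  moreover have "\<bar>S_dev X K s \<rho> n r (?Z(k := ?p)) - S_dev X K s \<rho> n r ?Z\<bar> \<le> 8 * B\<^sup>2 / real n"
    unfolding S_dev_def
  proof (rule abs_cSUP_diff_le)
    show "F_ball X K r \<noteq> {}" using zero_in_F_ball by blast
    show "bdd_above ((\<lambda>f. \<bar>emp_err s n (?Z(k := ?p)) f - exp_err s \<rho> f\<bar>) ` F_ball X K r)"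
      "bdd_above ((\<lambda>f. \<bar>emp_err s n ?Z f - exp_err s \<rho> f\<bar>) ` F_ball X K r)"
      using Z' p by (auto intro!: bdd_above_emp_deviation)
    show "\<bar>\<bar>emp_err s n (?Z(k := ?p)) f - exp_err s \<rho> f\<bar> - \<bar>emp_err s n ?Z f - exp_err s \<rho> f\<bar>\<bar>
        \<le> 8 * B\<^sup>2 / real n" if "f \<in> F_ball X K r" for f
      using emp_err_update_le[OF that k Z' p, of s] by linarith
  qed
  ultimately show "\<bar>S_dev X K s \<rho> n r (map_labels clip (Z(k := w))) - S_dev X K s \<rho> n r ?Z\<bar>
      \<le> 8 * B\<^sup>2 / real n" by simp
qed

lemma abs_S_dev_clip_le:
  assumes Z: "Z \<in> space (PiM {..<n} (\<lambda>_. \<rho>))"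
  shows "\<bar>S_dev X K s \<rho> n r (map_labels clip Z)\<bar> \<le> 8 * B\<^sup>2"
proof -
  let ?Z = "map_labels clip Z"
  have Z': "\<forall>i<n. fst (?Z i) \<in> X \<and> \<bar>snd (?Z i)\<bar> \<le> M" by (rule clipped_sample_bounded[OF Z])
  have "\<bar>emp_err s n ?Z f - exp_err s \<rho> f\<bar> \<le> 8 * B\<^sup>2" if "f \<in> F_ball X K r" for f
    using emp_err_nonneg[of s n ?Z f] emp_err_le[OF that Z', of s] exp_err_abs_le[OF that, of s] by linarith
  moreover have "0 \<le> S_dev X K s \<rho> n r ?Z"
    unfolding S_dev_def using Z'
    by (intro order.trans[OF abs_ge_zero cSUP_upper[OF zero_in_F_ball]] bdd_above_emp_deviation) auto
  ultimately show ?thesis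
    unfolding S_dev_def using zero_in_F_ball by (auto intro!: cSUP_least)
qed

lemma S_dev_clip_AE_eq:
  "AE Z in PiM {..<n} (\<lambda>_. \<rho>). S_dev X K s \<rho> n r (map_labels clip Z) = S_dev X K s \<rho> n r Z"
proof -
  have "AE Z in PiM {..<n} (\<lambda>_. \<rho>). \<forall>i\<in>{..<n}. \<bar>snd (Z i)\<bar> \<le> M"
    by (intro AE_finite_allI AE_PiM_component[OF R.prob_space_axioms _ bounded_labels]) auto
  then show ?thesis
  proof (rule eventually_mono)
    fix Z :: "nat \<Rightarrow> (real^'p) \<times> real" assume "\<forall>i\<in>{..<n}. \<bar>snd (Z i)\<bar> \<le> M"
    then have "\<forall>i<n. map_labels clip Z i = Z i"
      by (force simp: map_labels_def clip_def prod_eq_iff abs_le_iff)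
    then have "emp_err s n (map_labels clip Z) f = emp_err s n Z f" for f
      unfolding emp_err_def by (intro arg_cong2[where f = "(*)"] refl sum.cong) auto
    then show "S_dev X K s \<rho> n r (map_labels clip Z) = S_dev X K s \<rho> n r Z" by (simp add: S_dev_def)
  qed
qed

end

theorem lemma3:
  fixes X :: "(real^'p) set" and K :: "real^'p \<Rightarrow> real^'p \<Rightarrow> real"
    and \<rho> :: "((real^'p) \<times> real) measure"
    and s M r \<epsilon> :: real and n :: nat
  assumes "compact X"
    and "mercer_kernel X K"
    and "prob_space \<rho>"
    and "sets \<rho> = sets (restrict_space borel (X \<times> UNIV))"
    and "s > 0"
    and "AE z in \<rho>. \<bar>snd z\<bar> \<le> M"
    and "r > 0" and "\<epsilon> > 0"
  shows "measure (PiM {..<n} (\<lambda>_. \<rho>))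
           {Z \<in> space (PiM {..<n} (\<lambda>_. \<rho>)).
              \<bar>S_dev X K s \<rho> n r Z - (\<integral>Z'. S_dev X K s \<rho> n r Z' \<partial>(PiM {..<n} (\<lambda>_. \<rho>)))\<bar> \<ge> \<epsilon>}
         \<le> 2 * exp (- (real n * \<epsilon>\<^sup>2) / (32 * (M + kappa X K * diameter X * r) ^ 4))"
proof -
  interpret bounded_sampling \<rho> X K M r
    using assms by (simp add: bounded_sampling_def bounded_sampling_axioms_def)
  let ?P = "PiM {..<n} (\<lambda>_. \<rho>)"
  interpret P: prob_space ?P by (intro prob_space_PiM) unfold_locales
  define G where "G Z = S_dev X K s \<rho> n r (map_labels clip Z)" for Z
  have G_meas: "G \<in> borel_measurable ?P"
    unfolding G_def by (rule S_dev_map_labels_measurable[OF continuous_on_clip])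
  have "P.prob {Z \<in> space ?P. \<epsilon> \<le> \<bar>S_dev X K s \<rho> n r Z - P.expectation (S_dev X K s \<rho> n r)\<bar>}
      = P.prob {Z \<in> space ?P. \<epsilon> \<le> \<bar>G Z - P.expectation G\<bar>}"
    by (rule P.deviation_prob_cong_AE[OF S_dev_measurable G_meas])
       (rule eventually_mono[OF S_dev_clip_AE_eq[of s]], simp add: G_def)
  also have "\<dots> \<le> 2 * exp (- 2 * \<epsilon>\<^sup>2 / (real n * (8 * B\<^sup>2 / real n)\<^sup>2))"
  proof (rule R.mcdiarmid_inequality[OF G_meas _ _ \<open>\<epsilon> > 0\<close>])
    show "\<forall>Z\<in>space ?P. \<bar>G Z\<bar> \<le> 8 * B\<^sup>2" using abs_S_dev_clip_le by (simp add: G_def)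
    show "bounded_differences \<rho> n (8 * B\<^sup>2 / real n) G"
      unfolding G_def by (rule bounded_differences_S_dev_clip)
  qed
  also have "- 2 * \<epsilon>\<^sup>2 / (real n * (8 * B\<^sup>2 / real n)\<^sup>2) = - (real n * \<epsilon>\<^sup>2) / (32 * B ^ 4)"
    by (cases "n = 0 \<or> B = 0") (auto simp: field_simps power2_eq_square power4_eq_xxxx)
  finally show ?thesis by (simp add: B_def)
qed

end
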